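(* Let $T$ be a finite tree with positive weights $x_v$ (vertices) and $w_e$ (edges), let $c_0,c_l$ be vertices at distance $l\geq1$ with simple path $c_0,c_1,\dots,c_l$, and root $T$ at $c_0$. Then $$Z_{T_{c_1}-T_{c_l}}\,Z_T\;\geq\;Z_{T_{c_1}}\,Z_{T-T_{c_l}}\ \text{ if $l$ is odd},\qquad Z_{T_{c_1}-T_{c_l}}\,Z_T\;\leq\;Z_{T_{c_1}}\,Z_{T-T_{c_l}}\ \text{ if $l$ is even}.$$ (For $l=0$ the paper's statement, with left-hand side multiplied by $\mathbb 1_{l\geq1}$, reduces to the trivial inequality $0\le$ right-hand side.)
   Context: General monomer-dimer model on a finite graph $G=(V,E)$: $Z_G=\sum_{D}\prod_{e\in D}w_e\prod_{v\in\mathscr M_G(D)}x_v$, the sum over all matchings $D\subseteq E$, where $\mathscr M_G(D)$ is the set of vertices not covered by $D$; the partition function of the empty graph is $1$. In the tree $T$ rooted at $c_0$, $T_v$ denotes the subtree induced by $v$ and all its descendants; for subtrees $A\supseteq B$, $A-B$ denotes the subgraph induced by the vertices of $A$ not in $B$. *)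

theory Defs
  imports Complex_Main
begin

definition simple_graph :: "'a set \<Rightarrow> 'a set set \<Rightarrow> bool" where
  "simple_graph V E \<longleftrightarrow> finite V \<and>
     (\<forall>e\<in>E. \<exists>a b. a \<noteq> b \<and> e = {a, b} \<and> a \<in> V \<and> b \<in> V)"

definition is_path :: "'a set \<Rightarrow> 'a set set \<Rightarrow> 'a list \<Rightarrow> 'a \<Rightarrow> 'a \<Rightarrow> bool" where
  "is_path V E p u v \<longleftrightarrow> p \<noteq> [] \<and> hd p = u \<and> last p = v \<and> distinct p \<and> set p \<subseteq> V \<and>
     (\<forall>i. Suc i < length p \<longrightarrow> {p ! i, p ! Suc i} \<in> E)"

definition is_tree :: "'a set \<Rightarrow> 'a set set \<Rightarrow> bool" where
  "is_tree V E \<longleftrightarrow> simple_graph V E \<and> V \<noteq> {} \<and>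
     (\<forall>u\<in>V. \<forall>v\<in>V. \<exists>!p. is_path V E p u v)"

definition subtree_verts :: "'a set \<Rightarrow> 'a set set \<Rightarrow> 'a \<Rightarrow> 'a \<Rightarrow> 'a set" where
  "subtree_verts V E r v = {u \<in> V. \<exists>p. is_path V E p r u \<and> v \<in> set p}"

definition matching :: "'a set set \<Rightarrow> bool" where
  "matching D \<longleftrightarrow> (\<forall>e\<in>D. \<forall>f\<in>D. e \<noteq> f \<longrightarrow> e \<inter> f = {})"

text \<open>Monomer-dimer partition function of the subgraph of (V,E) induced by S
(for S = {} this is 1).\<close>
definition Z :: "'a set set \<Rightarrow> ('a set \<Rightarrow> real) \<Rightarrow> ('a \<Rightarrow> real) \<Rightarrow> 'a set \<Rightarrow> real" where
  "Z E w x S = (\<Sum>D\<in>{D. D \<subseteq> {e\<in>E. e \<subseteq> S} \<and> matching D}.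
       (\<Prod>e\<in>D. w e) * (\<Prod>v\<in>S - \<Union>D. x v))"

end

theory Submission
  imports Defs
begin

text \<open>Split T by the vertex c_k at which each vertex branches off the path c_0, ..., c_l into
  layers L_0, ..., L_l. Distinct layers are joined only by the path edges c_(k-1) c_k, so
  deleting such an edge or using it as a dimer shows that the partition functions of
  L_j \<union> ... \<union> L_(m-1) obey, for j = 0 and j = 1 alike, one three-term recurrence with
  nonnegative coefficients b_m. The two sides of the inequality are the crosswise products of
  these two solutions, and their difference, the Casoratian of the recurrence, equals
  (-1)^(l-1) b_1 ... b_l.\<close>

section \<open>Monomer-dimer partition functions\<close>

definition matchings :: "'a set set \<Rightarrow> 'a set \<Rightarrow> 'a set set set" where
  "matchings E S = {D. D \<subseteq> {e\<in>E. e \<subseteq> S} \<and> matching D}"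

lemma Z_eq_sum_matchings:
  "Z E w x S = (\<Sum>D\<in>matchings E S. (\<Prod>e\<in>D. w e) * (\<Prod>v\<in>S - \<Union>D. x v))"
  unfolding Z_def matchings_def ..

lemma finite_matchings: "finite E \<Longrightarrow> finite (matchings E S)"
  unfolding matchings_def by (rule finite_subset[of _ "Pow E"]) auto

lemma matchings_edge: "D \<in> matchings E S \<Longrightarrow> e \<in> D \<Longrightarrow> e \<in> E \<and> e \<subseteq> S"
  unfolding matchings_def by blast

lemma Z_cong_edges:
  "{e\<in>E. e \<subseteq> S} = {e\<in>E'. e \<subseteq> S} \<Longrightarrow> Z E w x S = Z E' w x S"
  unfolding Z_def by simp

lemma Z_empty: "{} \<notin> E \<Longrightarrow> Z E w x {} = 1"
proof -
  assume "{} \<notin> E"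
  then have "{D. D \<subseteq> {e\<in>E. e \<subseteq> {}} \<and> matching D} = {{}}"
    by (auto simp: matching_def)
  then show ?thesis unfolding Z_def by simp
qed

lemma Z_nonneg:
  "\<forall>e\<in>E. w e \<ge> 0 \<Longrightarrow> \<forall>v\<in>S. x v \<ge> 0 \<Longrightarrow> Z E w x S \<ge> 0"
  unfolding Z_def by (intro sum_nonneg mult_nonneg_nonneg prod_nonneg) auto

text \<open>Matchings of S either avoid the edge e0 or consist of e0 together with a matching of S - e0.\<close>
lemma Z_remove_edge:
  assumes fin: "finite E" and e0: "e0 \<in> E" "e0 \<subseteq> S" "e0 \<noteq> {}"
  shows "Z E w x S = Z (E - {e0}) w x S + w e0 * Z E w x (S - e0)"
proof -
  let ?f = "\<lambda>S D. (\<Prod>e\<in>D. w e) * (\<Prod>v\<in>S - \<Union>D. x v)"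
  have avoid: "{D\<in>matchings E S. e0 \<notin> D} = matchings (E - {e0}) S"
    unfolding matchings_def by auto
  have e0_notin: "e0 \<notin> D" if "D \<in> matchings E (S - e0)" for D
    using that e0(3) unfolding matchings_def by blast
  have use_e0: "{D\<in>matchings E S. e0 \<in> D} = insert e0 ` matchings E (S - e0)"
  proof (intro equalityI subsetI)
    fix D assume D: "D \<in> {D\<in>matchings E S. e0 \<in> D}"
    then have "D - {e0} \<in> matchings E (S - e0)"
      unfolding matchings_def matching_def by blast
    moreover have "D = insert e0 (D - {e0})" using D by auto
    ultimately show "D \<in> insert e0 ` matchings E (S - e0)" by blast
  next
    fix D assume "D \<in> insert e0 ` matchings E (S - e0)"
    then obtain D' where D': "D' \<in> matchings E (S - e0)" "D = insert e0 D'" by blast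
    then show "D \<in> {D\<in>matchings E S. e0 \<in> D}"
      using e0 unfolding matchings_def matching_def by blast
  qed
  have inj: "inj_on (insert e0) (matchings E (S - e0))"
    by (rule inj_onI) (metis e0_notin insert_ident)
  have "Z E w x S = sum (?f S) {D\<in>matchings E S. e0 \<notin> D} + sum (?f S) {D\<in>matchings E S. e0 \<in> D}"
  proof -
    have "sum (?f S) {D\<in>matchings E S. e0 \<notin> D} + sum (?f S) {D\<in>matchings E S. e0 \<in> D}
          = sum (?f S) ({D\<in>matchings E S. e0 \<notin> D} \<union> {D\<in>matchings E S. e0 \<in> D})"
      by (rule sum.union_disjoint[symmetric]) (use finite_matchings[OF fin] in auto)
    also have "{D\<in>matchings E S. e0 \<notin> D} \<union> {D\<in>matchings E S. e0 \<in> D} = matchings E S" by auto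
    finally show ?thesis unfolding Z_eq_sum_matchings by simp
  qed
  also have "sum (?f S) {D\<in>matchings E S. e0 \<in> D} = (\<Sum>D\<in>matchings E (S - e0). ?f S (insert e0 D))"
    unfolding use_e0 sum.reindex[OF inj] by simp
  also have "\<dots> = (\<Sum>D\<in>matchings E (S - e0). w e0 * ?f (S - e0) D)"
  proof (rule sum.cong[OF refl])
    fix D assume D: "D \<in> matchings E (S - e0)"
    have "finite D" using D fin unfolding matchings_def by (auto intro: finite_subset)
    moreover have "S - \<Union>(insert e0 D) = (S - e0) - \<Union>D" by auto
    ultimately show "?f S (insert e0 D) = w e0 * ?f (S - e0) D"
      using e0_notin[OF D] by simp
  qed
  finally show ?thesis
    unfolding avoid Z_eq_sum_matchings sum_distrib_left by simp
qed

lemma Z_union_separated: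
  assumes fin: "finite E" and ne: "{} \<notin> E"
    and fS: "finite S1" "finite S2" and disj: "S1 \<inter> S2 = {}"
    and sep: "\<forall>e\<in>E. e \<subseteq> S1 \<union> S2 \<longrightarrow> e \<subseteq> S1 \<or> e \<subseteq> S2"
  shows "Z E w x (S1 \<union> S2) = Z E w x S1 * Z E w x S2"
proof -
  let ?f = "\<lambda>S D. (\<Prod>e\<in>D. w e) * (\<Prod>v\<in>S - \<Union>D. x v)"
  let ?M = "matchings E S1 \<times> matchings E S2"
  have separate: "False" if "e \<in> E" "e \<subseteq> S1" "e \<subseteq> S2" for e
  proof -
    have "e = {}" using that(2,3) disj by blast
    then show False using that(1) ne by simp
  qed
  have part: "{e\<in>D1 \<union> D2. e \<subseteq> S1} = D1" "{e\<in>D1 \<union> D2. e \<subseteq> S2} = D2"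
    if "(D1, D2) \<in> ?M" for D1 D2
    using that by (auto dest: matchings_edge separate)
  have union_matching: "D1 \<union> D2 \<in> matchings E (S1 \<union> S2)" if "(D1, D2) \<in> ?M" for D1 D2
  proof -
    have D1: "D1 \<in> matchings E S1" and D2: "D2 \<in> matchings E S2" using that by auto
    have "D1 \<union> D2 \<subseteq> {e\<in>E. e \<subseteq> S1 \<union> S2}" using D1 D2 by (auto dest: matchings_edge)
    moreover have "matching (D1 \<union> D2)" unfolding matching_def
    proof (intro ballI impI)
      fix e f assume ef: "e \<in> D1 \<union> D2" "f \<in> D1 \<union> D2" "e \<noteq> f"
      consider "e \<in> D1" "f \<in> D1" | "e \<in> D2" "f \<in> D2" | "e \<subseteq> S1" "f \<subseteq> S2" | "e \<subseteq> S2" "f \<subseteq> S1"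
        using ef D1 D2 by (auto dest: matchings_edge)
      then show "e \<inter> f = {}"
      proof cases
        case 1
        then show ?thesis using ef(3) D1 unfolding matchings_def matching_def by simp
      next
        case 2
        then show ?thesis using ef(3) D2 unfolding matchings_def matching_def by simp
      qed (use disj in blast)+
    qed
    ultimately show ?thesis unfolding matchings_def by simp
  qed
  have weight: "?f (S1 \<union> S2) (D1 \<union> D2) = ?f S1 D1 * ?f S2 D2" if "(D1, D2) \<in> ?M" for D1 D2
  proof -
    have fD: "finite D1" "finite D2"
      using that fin unfolding matchings_def by (auto intro: finite_subset)
    have "D1 \<inter> D2 = {}"
      using that separate matchings_edge[of D1 E S1] matchings_edge[of D2 E S2] by blast
    then have "(\<Prod>e\<in>D1 \<union> D2. w e) = (\<Prod>e\<in>D1. w e) * (\<Prod>e\<in>D2. w e)"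
      by (rule prod.union_disjoint[OF fD])
    moreover have "(S1 \<union> S2) - \<Union>(D1 \<union> D2) = (S1 - \<Union>D1) \<union> (S2 - \<Union>D2)"
      using that disj matchings_edge[of D1 E S1] matchings_edge[of D2 E S2] by blast
    moreover have "(\<Prod>v\<in>(S1 - \<Union>D1) \<union> (S2 - \<Union>D2). x v) = (\<Prod>v\<in>S1 - \<Union>D1. x v) * (\<Prod>v\<in>S2 - \<Union>D2. x v)"
      by (rule prod.union_disjoint) (use fS disj in auto)
    ultimately show ?thesis by (simp add: ac_simps)
  qed
  have "Z E w x S1 * Z E w x S2 = (\<Sum>(D1, D2)\<in>?M. ?f S1 D1 * ?f S2 D2)"
    unfolding Z_eq_sum_matchings sum_product sum.cartesian_product ..
  also have "\<dots> = (\<Sum>D\<in>matchings E (S1 \<union> S2). ?f (S1 \<union> S2) D)"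
  proof (rule sum.reindex_bij_witness[where i = "\<lambda>D. ({e\<in>D. e \<subseteq> S1}, {e\<in>D. e \<subseteq> S2})"
        and j = "\<lambda>(D1, D2). D1 \<union> D2"])
    fix D assume D: "D \<in> matchings E (S1 \<union> S2)"
    show "({e\<in>D. e \<subseteq> S1}, {e\<in>D. e \<subseteq> S2}) \<in> ?M"
      using D unfolding matchings_def matching_def by auto
    show "(\<lambda>(D1, D2). D1 \<union> D2) ({e\<in>D. e \<subseteq> S1}, {e\<in>D. e \<subseteq> S2}) = D"
      using D sep matchings_edge[of D E "S1 \<union> S2"] by auto
  next
    fix P assume "P \<in> ?M"
    then obtain D1 D2 where P: "P = (D1, D2)" "(D1, D2) \<in> ?M" by (cases P) auto
    show "({e\<in>(\<lambda>(D1, D2). D1 \<union> D2) P. e \<subseteq> S1}, {e\<in>(\<lambda>(D1, D2). D1 \<union> D2) P. e \<subseteq> S2}) = P"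
      using part[OF P(2)] P(1) by simp
    show "(\<lambda>(D1, D2). D1 \<union> D2) P \<in> matchings E (S1 \<union> S2)"
      using union_matching[OF P(2)] P(1) by simp
    show "?f (S1 \<union> S2) ((\<lambda>(D1, D2). D1 \<union> D2) P) = (\<lambda>(D1, D2). ?f S1 D1 * ?f S2 D2) P"
      using weight[OF P(2)] P(1) by simp
  qed
  finally show ?thesis unfolding Z_eq_sum_matchings by simp
qed

section \<open>Three-term recurrences\<close>

lemma casoratian_three_term_recurrence:
  fixes u v a c :: "nat \<Rightarrow> real"
  assumes u: "\<And>m. s \<le> m \<Longrightarrow> m < n \<Longrightarrow> u (Suc (Suc m)) = a (Suc m) * u (Suc m) + c (Suc m) * u m"
    and v: "\<And>m. s \<le> m \<Longrightarrow> m < n \<Longrightarrow> v (Suc (Suc m)) = a (Suc m) * v (Suc m) + c (Suc m) * v m"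
    and "s \<le> n"
  shows "u (Suc n) * v n - u n * v (Suc n)
           = (-1) ^ (n - s) * (\<Prod>k\<in>{Suc s..n}. c k) * (u (Suc s) * v s - u s * v (Suc s))"
proof -
  have "k \<le> n \<longrightarrow> u (Suc k) * v k - u k * v (Suc k)
           = (-1) ^ (k - s) * (\<Prod>i\<in>{Suc s..k}. c i) * (u (Suc s) * v s - u s * v (Suc s))"
    if "s \<le> k" for k
    using that
  proof (induction k rule: nat_induct_at_least)
    case base
    then show ?case by simp
  next
    case (Suc k)
    show ?case
    proof
      assume "Suc k \<le> n"
      then have "u (Suc (Suc k)) * v (Suc k) - u (Suc k) * v (Suc (Suc k))
                 = - c (Suc k) * (u (Suc k) * v k - u k * v (Suc k))"
        using u[of k] v[of k] Suc.hyps by (simp add: algebra_simps)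
      then show "u (Suc (Suc k)) * v (Suc k) - u (Suc k) * v (Suc (Suc k))
           = (-1) ^ (Suc k - s) * (\<Prod>i\<in>{Suc s..Suc k}. c i) * (u (Suc s) * v s - u s * v (Suc s))"
        using Suc.IH \<open>Suc k \<le> n\<close> Suc.hyps
        by (simp add: prod.nat_ivl_Suc' Suc_diff_le)
    qed
  qed
  then show ?thesis using assms(3) by blast
qed

section \<open>Layers of a tree along a path\<close>

lemma is_path_take:
  assumes "is_path V E q a b" "i < length q"
  shows "is_path V E (take (Suc i) q) a (q ! i)"
proof -
  have "q \<noteq> []" using assms by (simp add: is_path_def)
  then have "hd (take (Suc i) q) = hd q" by (cases q) auto
  moreover have "last (take (Suc i) q) = q ! i"
    using assms(2) by (simp add: take_Suc_conv_app_nth)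
  moreover have "set (take (Suc i) q) \<subseteq> set q" by (rule set_take_subset)
  ultimately show ?thesis using assms unfolding is_path_def by (auto simp: nth_take)
qed

lemma is_path_snoc:
  assumes q: "is_path V E q a b" and "{b, v} \<in> E" "v \<notin> set q" "v \<in> V"
  shows "is_path V E (q @ [v]) a v"
proof -
  have "{(q @ [v]) ! i, (q @ [v]) ! Suc i} \<in> E" if "Suc i < length (q @ [v])" for i
  proof (cases "Suc i < length q")
    case True
    then show ?thesis using q unfolding is_path_def by (simp add: nth_append)
  next
    case False
    then have i: "Suc i = length q" using that by simp
    moreover have "q \<noteq> []" "last q = b" using q unfolding is_path_def by auto
    ultimately have "(q @ [v]) ! i = b" "(q @ [v]) ! Suc i = v"
      by (simp_all add: nth_append last_conv_nth flip: i)
    then show ?thesis using assms(2) by simp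
  qed
  then show ?thesis using assms unfolding is_path_def by auto
qed

lemma finite_edges_of_tree: "is_tree V E \<Longrightarrow> finite E"
  unfolding is_tree_def simple_graph_def by (auto intro: finite_subset[of E "Pow V"])

text \<open>The list p is the path c_0, ..., c_l; the tree is rooted at c_0.\<close>
locale tree_with_path =
  fixes V :: "'a set" and E :: "'a set set" and p :: "'a list" and l :: nat
  assumes tree: "is_tree V E"
    and path: "is_path V E p (p ! 0) (p ! l)"
    and length_path: "length p = l + 1"
begin

definition root_path :: "'a \<Rightarrow> 'a list" where
  "root_path u = (THE q. is_path V E q (p ! 0) u)"

text \<open>The vertex u lies in T_{c_k} - T_{c_(k+1)} (read T_{c_(l+1)} = {}) exactly for k = path_index u.\<close>
definition path_index :: "'a \<Rightarrow> nat" where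
  "path_index u = Max {i. i \<le> l \<and> p ! i \<in> set (root_path u)}"

definition layers :: "nat \<Rightarrow> nat \<Rightarrow> 'a set" where
  "layers j m = {u\<in>V. j \<le> path_index u \<and> path_index u < m}"

abbreviation layer :: "nat \<Rightarrow> 'a set" where
  "layer k \<equiv> layers k (Suc k)"

lemma finite_V: "finite V"
  using tree unfolding is_tree_def simple_graph_def by auto

lemma edge_doubleton: "e \<in> E \<Longrightarrow> \<exists>a b. a \<noteq> b \<and> e = {a, b} \<and> a \<in> V \<and> b \<in> V"
  using tree unfolding is_tree_def simple_graph_def by auto

lemma empty_not_edge: "{} \<notin> E"
  using edge_doubleton by fastforce

lemma nth_path_in_V: "k \<le> l \<Longrightarrow> p ! k \<in> V"
  using path length_path unfolding is_path_def by (auto intro: nth_mem)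

lemma path_edge: "Suc k \<le> l \<Longrightarrow> {p ! k, p ! Suc k} \<in> E"
  using path length_path unfolding is_path_def by simp

lemma root_in_V: "p ! 0 \<in> V"
  using nth_path_in_V by simp

lemma root_path_is_path: "u \<in> V \<Longrightarrow> is_path V E (root_path u) (p ! 0) u"
  unfolding root_path_def using tree root_in_V unfolding is_tree_def by (metis theI')

lemma root_path_unique: "u \<in> V \<Longrightarrow> is_path V E q (p ! 0) u \<Longrightarrow> root_path u = q"
  using root_path_is_path tree root_in_V unfolding is_tree_def by metis

lemma root_path_nth: "k \<le> l \<Longrightarrow> root_path (p ! k) = take (Suc k) p"
  using root_path_unique[OF nth_path_in_V is_path_take[OF path, of k]] length_path by simp

lemma root_path_prefix:
  assumes "u \<in> V" "i < length (root_path u)"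
  shows "root_path (root_path u ! i) = take (Suc i) (root_path u)"
proof -
  have "is_path V E (take (Suc i) (root_path u)) (p ! 0) (root_path u ! i)"
    by (rule is_path_take[OF root_path_is_path[OF assms(1)] assms(2)])
  moreover have "root_path u ! i \<in> V"
    using root_path_is_path[OF assms(1)] assms(2) unfolding is_path_def by (auto intro: nth_mem)
  ultimately show ?thesis by (rule root_path_unique[rotated])
qed

lemma root_path_simps:
  assumes "u \<in> V"
  shows "root_path u \<noteq> []" "hd (root_path u) = p ! 0" "last (root_path u) = u"
    "distinct (root_path u)"
  using root_path_is_path[OF assms] unfolding is_path_def by auto

lemma root_path_edge:
  assumes uv: "{u, v} \<in> E" "u \<noteq> v" "u \<in> V" "v \<in> V"
  shows "root_path v = root_path u @ [v] \<or> root_path u = root_path v @ [u]"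
proof (cases "v \<in> set (root_path u)")
  case False
  then show ?thesis
    using root_path_unique[OF uv(4) is_path_snoc[OF root_path_is_path[OF uv(3)] _ False uv(4)]]
      root_path_simps uv by simp
next
  case True
  then obtain i where i: "i < length (root_path u)" "root_path u ! i = v"
    by (metis in_set_conv_nth)
  have last_u: "root_path u ! (length (root_path u) - 1) = u"
    using root_path_simps[OF uv(3)] by (simp add: last_conv_nth)
  then have i_lt: "Suc i < length (root_path u)" using i uv(2)
    by (metis Suc_lessI diff_Suc_1)
  have v_path: "root_path v = take (Suc i) (root_path u)"
    using root_path_prefix[OF uv(3) i(1)] i(2) by simp
  have "u \<notin> set (root_path v)"
  proof
    assume "u \<in> set (root_path v)"
    then obtain k where k: "k < Suc i" "root_path u ! k = u"
      using v_path i_lt by (auto simp: in_set_conv_nth)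
    moreover have "k < length (root_path u)" "length (root_path u) - 1 < length (root_path u)"
      using k(1) i_lt by auto
    ultimately have "k = length (root_path u) - 1"
      using last_u nth_eq_iff_index_eq[OF root_path_simps(4)[OF uv(3)]] by metis
    then show False using k i_lt by simp
  qed
  moreover have "{v, u} \<in> E" using uv(1) by (simp add: insert_commute)
  ultimately show ?thesis
    using root_path_unique[OF uv(3) is_path_snoc[OF root_path_is_path[OF uv(4)]]]
      root_path_simps uv by simp
qed

lemma path_index_le: "u \<in> V \<Longrightarrow> path_index u \<le> l"
  and nth_path_index_in_root_path: "u \<in> V \<Longrightarrow> p ! path_index u \<in> set (root_path u)"
proof -
  assume u: "u \<in> V"
  have "0 \<in> {i. i \<le> l \<and> p ! i \<in> set (root_path u)}"
    using root_path_simps[OF u] by (metis hd_in_set le0 mem_Collect_eq)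
  then have "path_index u \<in> {i. i \<le> l \<and> p ! i \<in> set (root_path u)}"
    unfolding path_index_def by (intro Max_in) auto
  then show "path_index u \<le> l" "p ! path_index u \<in> set (root_path u)" by auto
qed

lemma nth_in_root_path_iff:
  assumes u: "u \<in> V" and "i \<le> l"
  shows "p ! i \<in> set (root_path u) \<longleftrightarrow> i \<le> path_index u"
proof
  assume "p ! i \<in> set (root_path u)"
  then show "i \<le> path_index u" unfolding path_index_def using assms by (intro Max_ge) auto
next
  assume i: "i \<le> path_index u"
  obtain k where k: "k < length (root_path u)" "root_path u ! k = p ! path_index u"
    using nth_path_index_in_root_path[OF u] by (metis in_set_conv_nth)
  have "take (Suc (path_index u)) p = take (Suc k) (root_path u)"
    using root_path_prefix[OF u k(1)] root_path_nth[OF path_index_le[OF u]] k(2) by simp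
  then have "set (take (Suc (path_index u)) p) \<subseteq> set (root_path u)"
    by (metis set_take_subset)
  moreover have "p ! i \<in> set (take (Suc (path_index u)) p)"
    using i path_index_le[OF u] length_path by (auto simp: in_set_conv_nth intro!: exI[of _ i])
  ultimately show "p ! i \<in> set (root_path u)" by blast
qed

lemma path_index_nth:
  assumes k: "k \<le> l" shows "path_index (p ! k) = k"
proof -
  have u: "p ! k \<in> V" using nth_path_in_V[OF k] .
  have in_prefix: "p ! i \<in> set (take (Suc k) p) \<longleftrightarrow> i \<le> k" if "i \<le> l" for i
  proof -
    have "distinct p" using path unfolding is_path_def by simp
    then show ?thesis using that k length_path
      by (auto simp: in_set_conv_nth nth_eq_iff_index_eq intro!: exI[of _ i])
  qed
  show ?thesis
    using nth_in_root_path_iff[OF u] in_prefix root_path_nth[OF k] path_index_le[OF u] k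
    by (metis le_antisym order_refl)
qed

lemma subtree_verts_eq_layers:
  assumes "i \<le> l"
  shows "subtree_verts V E (p ! 0) (p ! i) = layers i (Suc l)"
proof -
  have "u \<in> subtree_verts V E (p ! 0) (p ! i) \<longleftrightarrow> u \<in> layers i (Suc l)" for u
  proof (cases "u \<in> V")
    case True
    have "(\<exists>q. is_path V E q (p ! 0) u \<and> p ! i \<in> set q) \<longleftrightarrow> p ! i \<in> set (root_path u)"
      using root_path_unique[OF True] root_path_is_path[OF True] by metis
    then have "u \<in> subtree_verts V E (p ! 0) (p ! i) \<longleftrightarrow> p ! i \<in> set (root_path u)"
      unfolding subtree_verts_def using True by simp
    also have "\<dots> \<longleftrightarrow> i \<le> path_index u" by (rule nth_in_root_path_iff[OF True assms])
    finally show ?thesis unfolding layers_def using path_index_le[OF True] True by auto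
  next
    case False
    then show ?thesis unfolding subtree_verts_def layers_def by auto
  qed
  then show ?thesis by (rule set_eqI)
qed

lemma layers_empty: "m \<le> j \<Longrightarrow> layers j m = {}"
  unfolding layers_def by auto

lemma layers_disjoint: "m \<le> j' \<Longrightarrow> layers j m \<inter> layers j' m' = {}"
  unfolding layers_def by auto

lemma V_eq_layers: "V = layers 0 (Suc l)"
  unfolding layers_def using path_index_le by (auto simp: less_Suc_eq_le)

lemma edge_path_index_dir:
  assumes "u \<in> V" "v \<in> V" "root_path v = root_path u @ [v]"
  shows "path_index u = path_index v \<or> (\<exists>k. Suc k \<le> l \<and> u = p ! k \<and> v = p ! Suc k)"
proof (cases "\<exists>k\<le>l. v = p ! k")
  case False
  then have "\<forall>i\<le>l. p ! i \<in> set (root_path u) \<longleftrightarrow> p ! i \<in> set (root_path v)"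
    using assms(3) by auto
  then have "{i. i \<le> l \<and> p ! i \<in> set (root_path u)} = {i. i \<le> l \<and> p ! i \<in> set (root_path v)}"
    by auto
  then show ?thesis unfolding path_index_def by simp
next
  case True
  then obtain k where k: "k \<le> l" "v = p ! k" by blast
  have "p ! 0 \<in> set (root_path u)" using root_path_simps(1,2)[OF assms(1)] by (metis hd_in_set)
  moreover have "v \<notin> set (root_path u)" using root_path_simps(4)[OF assms(2)] assms(3) by simp
  ultimately have "v \<noteq> p ! 0" by blast
  then obtain k' where k': "k = Suc k'" using k by (cases k) auto
  have "take k p @ [p ! k] = root_path u @ [v]"
    using root_path_nth[OF k(1)] k assms(3) length_path by (simp add: take_Suc_conv_app_nth)
  then have "root_path u = take k p" by simp
  then have "u = p ! k'"
    using root_path_simps(3)[OF assms(1)] k' k(1) length_path by (simp add: take_Suc_conv_app_nth)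
  then show ?thesis using k k' by auto
qed

lemma edge_path_index:
  assumes "{u, v} \<in> E" "u \<noteq> v" "u \<in> V" "v \<in> V"
  shows "path_index u = path_index v \<or> (\<exists>k. Suc k \<le> l \<and> {u, v} = {p ! k, p ! Suc k})"
  using root_path_edge[OF assms]
proof
  assume "root_path v = root_path u @ [v]"
  then show ?thesis using edge_path_index_dir[OF assms(3,4)] by auto
next
  assume "root_path u = root_path v @ [u]"
  then show ?thesis using edge_path_index_dir[OF assms(4,3)] by (auto simp: insert_commute)
qed

lemma edge_into_layer:
  assumes A: "A \<subseteq> layers 0 k" and B: "B \<subseteq> layer k"
    and e: "e \<in> E" "e \<subseteq> A \<union> B" "\<not> e \<subseteq> A" "\<not> e \<subseteq> B"
  shows "\<exists>m. k = Suc m \<and> k \<le> l \<and> e = {p ! m, p ! k} \<and> p ! m \<in> A \<and> p ! k \<in> B"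
proof -
  obtain a0 b0 where e_ab: "e = {a0, b0}" using edge_doubleton[OF e(1)] by blast
  then have "a0 \<in> A \<and> b0 \<in> B \<or> b0 \<in> A \<and> a0 \<in> B" using e(2-4) by auto
  then obtain a b where ab: "e = {a, b}" "a \<in> A" "b \<in> B"
    using e_ab by (metis insert_commute)
  have a: "path_index a < k" "a \<in> V" and b: "path_index b = k" "b \<in> V"
    using A B ab(2,3) unfolding layers_def by auto
  then have "a \<noteq> b" "path_index a \<noteq> path_index b" by auto
  then obtain m where m: "Suc m \<le> l" "{a, b} = {p ! m, p ! Suc m}"
    using edge_path_index[OF _ _ a(2) b(2)] ab(1) e(1) by blast
  then have "a = p ! m \<and> b = p ! Suc m"
    using a(1) b(1) path_index_nth[of m] path_index_nth[of "Suc m"]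
    by (auto simp: doubleton_eq_iff)
  then show ?thesis using m ab b(1) path_index_nth[of "Suc m"] by auto
qed

lemma Z_layers_union_separated:
  assumes "A \<subseteq> layers 0 k" "B \<subseteq> layer k" "\<And>m. k = Suc m \<Longrightarrow> p ! m \<in> A \<Longrightarrow> p ! k \<notin> B"
  shows "Z E w x (A \<union> B) = Z E w x A * Z E w x B"
proof (rule Z_union_separated[OF finite_edges_of_tree[OF tree] empty_not_edge])
  show "finite A" "finite B" using assms finite_V unfolding layers_def by (auto intro: finite_subset)
  show "A \<inter> B = {}" using assms(1,2) layers_disjoint[of k k 0 "Suc k"] by blast
  show "\<forall>e\<in>E. e \<subseteq> A \<union> B \<longrightarrow> e \<subseteq> A \<or> e \<subseteq> B"
  proof (intro ballI impI)
    fix e assume "e \<in> E" "e \<subseteq> A \<union> B"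
    then show "e \<subseteq> A \<or> e \<subseteq> B"
      using edge_into_layer[OF assms(1,2)] assms(3) by blast
  qed
qed

lemma Z_layers_union_bridge:
  assumes k: "Suc m \<le> l" and A: "A \<subseteq> layers 0 (Suc m)" and B: "B \<subseteq> layer (Suc m)"
    and inA: "p ! m \<in> A" and inB: "p ! Suc m \<in> B"
  shows "Z E w x (A \<union> B) = Z E w x A * Z E w x B
           + w {p ! m, p ! Suc m} * (Z E w x (A - {p ! m}) * Z E w x (B - {p ! Suc m}))"
proof -
  define e0 where "e0 = {p ! m, p ! Suc m}"
  have fin: "finite E" by (rule finite_edges_of_tree[OF tree])
  have nA: "p ! Suc m \<notin> A" and nB: "p ! m \<notin> B"
    using A B path_index_nth[OF k] path_index_nth[of m] k unfolding layers_def by auto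
  have "Z E w x (A \<union> B) = Z (E - {e0}) w x (A \<union> B) + w e0 * Z E w x ((A \<union> B) - e0)"
    by (rule Z_remove_edge[OF fin]) (use path_edge[OF k] inA inB in \<open>auto simp: e0_def\<close>)
  also have "Z (E - {e0}) w x (A \<union> B) = Z (E - {e0}) w x A * Z (E - {e0}) w x B"
  proof (rule Z_union_separated)
    show "finite (E - {e0})" "{} \<notin> E - {e0}" using fin empty_not_edge by auto
    show "finite A" "finite B" using A B finite_V unfolding layers_def by (auto intro: finite_subset)
    show "A \<inter> B = {}" using A B layers_disjoint[of "Suc m" "Suc m" 0 "Suc (Suc m)"] by blast
    show "\<forall>e\<in>E - {e0}. e \<subseteq> A \<union> B \<longrightarrow> e \<subseteq> A \<or> e \<subseteq> B"
      using edge_into_layer[OF A B] e0_def by auto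
  qed
  also have "Z (E - {e0}) w x A = Z E w x A"
    by (rule Z_cong_edges) (use nA e0_def in auto)
  also have "Z (E - {e0}) w x B = Z E w x B"
    by (rule Z_cong_edges) (use nB e0_def in auto)
  also have "(A \<union> B) - e0 = (A - {p ! m}) \<union> (B - {p ! Suc m})"
    using nA nB e0_def by auto
  also have "Z E w x \<dots> = Z E w x (A - {p ! m}) * Z E w x (B - {p ! Suc m})"
    by (rule Z_layers_union_separated[of _ "Suc m"]) (use A B in auto)
  finally show ?thesis unfolding e0_def .
qed

text \<open>Weight of the configurations that use the dimer c_(k-1) c_k, which removes both ends
  from their layers.\<close>
definition bridge_weight :: "('a set \<Rightarrow> real) \<Rightarrow> ('a \<Rightarrow> real) \<Rightarrow> nat \<Rightarrow> real" where
  "bridge_weight w x k = w {p ! (k - 1), p ! k}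
     * Z E w x (layer (k - 1) - {p ! (k - 1)}) * Z E w x (layer k - {p ! k})"

lemma Z_layers_recurrence:
  assumes "j \<le> m" "Suc m \<le> l"
  shows "Z E w x (layers j (Suc (Suc m)))
           = Z E w x (layer (Suc m)) * Z E w x (layers j (Suc m))
             + bridge_weight w x (Suc m) * Z E w x (layers j m)"
proof -
  have c: "path_index (p ! m) = m" "path_index (p ! Suc m) = Suc m" "p ! m \<in> V" "p ! Suc m \<in> V"
    using path_index_nth nth_path_in_V assms by auto
  have "layers j (Suc (Suc m)) = layers j (Suc m) \<union> layer (Suc m)"
    unfolding layers_def using assms by auto
  also have "Z E w x \<dots> = Z E w x (layers j (Suc m)) * Z E w x (layer (Suc m))
     + w {p ! m, p ! Suc m} * (Z E w x (layers j (Suc m) - {p ! m}) * Z E w x (layer (Suc m) - {p ! Suc m}))"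
    by (rule Z_layers_union_bridge) (use assms c in \<open>auto simp: layers_def\<close>)
  also have "layers j (Suc m) - {p ! m} = layers j m \<union> (layer m - {p ! m})"
    unfolding layers_def using assms c by auto
  also have "Z E w x \<dots> = Z E w x (layers j m) * Z E w x (layer m - {p ! m})"
    by (rule Z_layers_union_separated[of _ m]) (auto simp: layers_def)
  finally show ?thesis unfolding bridge_weight_def by (simp add: algebra_simps)
qed

lemma Z_layers_casoratian:
  assumes "1 \<le> l"
  shows "Z E w x (layers 0 (Suc l)) * Z E w x (layers 1 l) - Z E w x (layers 0 l) * Z E w x (layers 1 (Suc l))
           = (-1) ^ (l - 1) * (\<Prod>k\<in>{1..l}. bridge_weight w x k)"
proof -
  have empty: "Z E w x (layers j j) = 1" for j
    using Z_empty[OF empty_not_edge] layers_empty by simp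
  have "Z E w x (layers 0 (Suc l)) * Z E w x (layers 1 l) - Z E w x (layers 0 l) * Z E w x (layers 1 (Suc l))
        = (-1) ^ (l - 1) * (\<Prod>k\<in>{2..l}. bridge_weight w x k)
          * (Z E w x (layers 0 2) * Z E w x (layers 1 1) - Z E w x (layers 0 1) * Z E w x (layers 1 2))"
    using casoratian_three_term_recurrence[of 1 l "\<lambda>m. Z E w x (layers 0 m)"
        "\<lambda>k. Z E w x (layer k)" "bridge_weight w x" "\<lambda>m. Z E w x (layers 1 m)"]
      Z_layers_recurrence assms by (simp add: numeral_2_eq_2)
  also have "Z E w x (layers 0 2) * Z E w x (layers 1 1) - Z E w x (layers 0 1) * Z E w x (layers 1 2)
             = bridge_weight w x 1"
    using Z_layers_recurrence[of 0 0] assms empty by (simp add: numeral_2_eq_2)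
  finally show ?thesis using assms by (simp add: prod.atLeast_Suc_atMost numeral_2_eq_2 ac_simps)
qed

lemma bridge_weight_nonneg:
  assumes "\<forall>e\<in>E. w e \<ge> 0" "\<forall>v\<in>V. x v \<ge> 0" "1 \<le> k" "k \<le> l"
  shows "bridge_weight w x k \<ge> 0"
  unfolding bridge_weight_def using assms path_edge[of "k - 1"]
  by (intro mult_nonneg_nonneg Z_nonneg) (auto simp: layers_def)

end

theorem lemma5p2:
  fixes V :: "'a set" and E :: "'a set set"
    and w :: "'a set \<Rightarrow> real" and x :: "'a \<Rightarrow> real"
    and p :: "'a list" and l :: nat
  assumes tree: "is_tree V E"
    and wpos: "\<forall>e\<in>E. w e > 0"
    and xpos: "\<forall>v\<in>V. x v > 0"
    and path: "is_path V E p (p ! 0) (p ! l)"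
    and len: "length p = l + 1"
    and l1: "l \<ge> 1"
  shows "(odd l \<longrightarrow>
            Z E w x (subtree_verts V E (p!0) (p!1) - subtree_verts V E (p!0) (p!l)) * Z E w x V
            \<ge> Z E w x (subtree_verts V E (p!0) (p!1)) * Z E w x (V - subtree_verts V E (p!0) (p!l)))
       \<and> (even l \<longrightarrow>
            Z E w x (subtree_verts V E (p!0) (p!1) - subtree_verts V E (p!0) (p!l)) * Z E w x V
            \<le> Z E w x (subtree_verts V E (p!0) (p!1)) * Z E w x (V - subtree_verts V E (p!0) (p!l)))"
proof -
  interpret tree_with_path V E p l using tree path len by unfold_locales
  have subtrees: "subtree_verts V E (p ! 0) (p ! 1) = layers 1 (Suc l)"
    "subtree_verts V E (p ! 0) (p ! l) = layers l (Suc l)"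
    using subtree_verts_eq_layers l1 by auto
  have differences: "layers 1 (Suc l) - layers l (Suc l) = layers 1 l" "V - layers l (Suc l) = layers 0 l"
    using path_index_le unfolding layers_def by (auto simp: less_Suc_eq_le)
  have "0 \<le> (\<Prod>k\<in>{1..l}. bridge_weight w x k)"
    using bridge_weight_nonneg wpos xpos by (intro prod_nonneg) (auto simp: less_imp_le)
  moreover have "(-1) ^ (l - 1) = (if odd l then 1 else -1 :: real)"
    using l1 by (cases l) auto
  ultimately show ?thesis
    using Z_layers_casoratian[OF l1, of w x]
    unfolding subtrees differences V_eq_layers[symmetric]
    by (auto simp: algebra_simps split: if_splits)
qed

end
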